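(* Let $(X, M, \ast)$ be a stationary fuzzy metric space (in the sense of George and Veeramani), and write $M(x,y)$ for the constant value of $M(x,y,t)$, $t>0$. Then for every $y\in X$, the function $M_y: X\to\mathbb{R}$, $M_y(x)=M(x,y)$, is $\mathbb{R}$-uniformly continuous; that is, for every $\varepsilon>0$ there exist $s>0$ and $\delta\in(0,1)$ such that for all $x,z\in X$, $M(x,z,s)>1-\delta$ implies $|M_y(x)-M_y(z)|<\varepsilon$.
   Context: A continuous $t$-norm $\ast$ is a continuous binary operation on $[0,1]$ that is associative, commutative, nondecreasing in each argument, and has $1$ as neutral element. A fuzzy metric space (George–Veeramani) is a triple $(X,M,\ast)$ where $X$ is a nonempty set, $\ast$ is a continuous $t$-norm, and $M: X\times X\times(0,+\infty)\to[0,1]$ satisfies, for all $x,y,z\in X$ and $s,t>0$: (GV1) $M(x,y,t)>0$; (GV2) $M(x,y,t)=1$ iff $x=y$; (GV3) $M(x,y,t)=M(y,x,t)$; (GV4) $M(x,y,t)\ast M(y,z,s)\le M(x,z,t+s)$; (GV5) $t\mapsto M(x,y,t)$ is continuous on $(0,+\infty)$. The fuzzy metric $M$ is stationary if for all $x,y\in X$ the function $t\mapsto M(x,y,t)$ is constant. A map $f:X\to\mathbb{R}$ on a fuzzy metric space $(X,M,\ast)$ is $\mathbb{R}$-uniformly continuous if for every $\varepsilon>0$ there exist $s>0$ and $\delta\in(0,1)$ such that $M(x,y,s)>1-\delta$ implies $|f(x)-f(y)|<\varepsilon$. *)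

theory Defs
  imports "HOL-Analysis.Analysis"
begin

text \<open>Continuous t-norm on [0,1]; the operation is a total function on reals but only
its behaviour on [0,1] matters.\<close>
definition cont_tnorm :: "(real \<Rightarrow> real \<Rightarrow> real) \<Rightarrow> bool" where
  "cont_tnorm T \<longleftrightarrow>
     (\<forall>a\<in>{0..1}. \<forall>b\<in>{0..1}. T a b \<in> {0..1}) \<and>
     (\<forall>a\<in>{0..1}. \<forall>b\<in>{0..1}. \<forall>c\<in>{0..1}. T (T a b) c = T a (T b c)) \<and>
     (\<forall>a\<in>{0..1}. \<forall>b\<in>{0..1}. T a b = T b a) \<and>
     (\<forall>a\<in>{0..1}. \<forall>b\<in>{0..1}. \<forall>c\<in>{0..1}. \<forall>d\<in>{0..1}. a \<le> c \<longrightarrow> b \<le> d \<longrightarrow> T a b \<le> T c d) \<and>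
     (\<forall>a\<in>{0..1}. T a 1 = a) \<and>
     continuous_on ({0..1} \<times> {0..1}) (\<lambda>p. T (fst p) (snd p))"

text \<open>George--Veeramani fuzzy metric space (X, M, T); M is only relevant for t > 0.\<close>
definition fuzzy_metric :: "'a set \<Rightarrow> ('a \<Rightarrow> 'a \<Rightarrow> real \<Rightarrow> real) \<Rightarrow> (real \<Rightarrow> real \<Rightarrow> real) \<Rightarrow> bool" where
  "fuzzy_metric X M T \<longleftrightarrow> X \<noteq> {} \<and> cont_tnorm T \<and>
     (\<forall>x\<in>X. \<forall>y\<in>X. \<forall>t>0. M x y t \<in> {0..1}) \<and>
     (\<forall>x\<in>X. \<forall>y\<in>X. \<forall>t>0. M x y t > 0) \<and>
     (\<forall>x\<in>X. \<forall>y\<in>X. \<forall>t>0. M x y t = 1 \<longleftrightarrow> x = y) \<and>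
     (\<forall>x\<in>X. \<forall>y\<in>X. \<forall>t>0. M x y t = M y x t) \<and>
     (\<forall>x\<in>X. \<forall>y\<in>X. \<forall>z\<in>X. \<forall>t>0. \<forall>s>0. T (M x y t) (M y z s) \<le> M x z (t + s)) \<and>
     (\<forall>x\<in>X. \<forall>y\<in>X. continuous_on {0<..} (M x y))"

definition stationary_fuzzy_metric :: "'a set \<Rightarrow> ('a \<Rightarrow> 'a \<Rightarrow> real \<Rightarrow> real) \<Rightarrow> bool" where
  "stationary_fuzzy_metric X M \<longleftrightarrow>
     (\<forall>x\<in>X. \<forall>y\<in>X. \<forall>t>0. \<forall>s>0. M x y t = M x y s)"

definition R_uniformly_continuous ::
    "'a set \<Rightarrow> ('a \<Rightarrow> 'a \<Rightarrow> real \<Rightarrow> real) \<Rightarrow> ('a \<Rightarrow> real) \<Rightarrow> bool" where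
  "R_uniformly_continuous X M f \<longleftrightarrow>
     (\<forall>\<epsilon>>0. \<exists>s>0. \<exists>\<delta>. 0 < \<delta> \<and> \<delta> < 1 \<and>
        (\<forall>x\<in>X. \<forall>y\<in>X. M x y s > 1 - \<delta> \<longrightarrow> \<bar>f x - f y\<bar> < \<epsilon>))"

end

theory Submission
  imports Defs
begin

text \<open>Stationarity turns the triangle inequality T (M x z) (M z y) \<le> M x y into a statement
  about a single parameter. If M x z is close to 1, then by uniform continuity of the t-norm
  on the compact square, T (M x z) (M z y) is close to T 1 (M z y) = M z y, so M x y exceeds
  M z y up to a small error; symmetry of M gives the reverse bound.\<close>

lemma cont_tnorm_uniformly_near_one:
  assumes "cont_tnorm T" "e > 0"
  obtains d where "d > 0" "\<And>a b. a \<in> {0..1} \<Longrightarrow> b \<in> {0..1} \<Longrightarrow> 1 - a < d \<Longrightarrow> \<bar>T a b - b\<bar> < e"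
proof -
  let ?S = "{0..1::real} \<times> {0..1::real}"
  have "continuous_on ?S (\<lambda>p. T (fst p) (snd p))"
    using assms(1) unfolding cont_tnorm_def by blast
  then have "uniformly_continuous_on ?S (\<lambda>p. T (fst p) (snd p))"
    by (rule compact_uniformly_continuous) (simp add: compact_Times)
  then obtain d where d: "d > 0" and close: "\<And>p q. p \<in> ?S \<Longrightarrow> q \<in> ?S \<Longrightarrow> dist q p < d \<Longrightarrow>
      dist (T (fst q) (snd q)) (T (fst p) (snd p)) < e"
    using assms(2) by (rule uniformly_continuous_onE) blast
  have unit: "\<forall>b\<in>{0..1::real}. T 1 b = b"
    using assms(1) unfolding cont_tnorm_def by force
  show thesis
  proof (rule that[OF d])
    fix a b :: real assume a: "a \<in> {0..1}" and b: "b \<in> {0..1}" and "1 - a < d"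
    then have "dist (a, b) (1, b) < d" by (simp add: dist_Pair_Pair dist_real_def)
    then have "dist (T a b) (T 1 b) < e" using close[of "(1, b)" "(a, b)"] a b by simp
    then show "\<bar>T a b - b\<bar> < e" using unit b by (simp add: dist_real_def)
  qed
qed

lemma fuzzy_metric_cont_tnorm: "fuzzy_metric X M T \<Longrightarrow> cont_tnorm T"
  unfolding fuzzy_metric_def by (elim conjE)

lemma fuzzy_metric_range:
  assumes "fuzzy_metric X M T" "x \<in> X" "y \<in> X" "t > 0"
  shows "M x y t \<in> {0..1}"
proof -
  have "\<forall>x\<in>X. \<forall>y\<in>X. \<forall>t>0. M x y t \<in> {0..1}"
    using assms(1) unfolding fuzzy_metric_def by (elim conjE)
  then show ?thesis using assms(2-4) by blast
qed

lemma fuzzy_metric_commute: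
  assumes "fuzzy_metric X M T" "x \<in> X" "y \<in> X" "t > 0"
  shows "M x y t = M y x t"
proof -
  have "\<forall>x\<in>X. \<forall>y\<in>X. \<forall>t>0. M x y t = M y x t"
    using assms(1) unfolding fuzzy_metric_def by (elim conjE)
  then show ?thesis using assms(2-4) by blast
qed

lemma stationary_fuzzy_metric_triangle:
  assumes "fuzzy_metric X M T" "stationary_fuzzy_metric X M"
    and "x \<in> X" "y \<in> X" "z \<in> X" "t > 0"
  shows "T (M x y t) (M y z t) \<le> M x z t"
proof -
  have "\<forall>x\<in>X. \<forall>y\<in>X. \<forall>z\<in>X. \<forall>t>0. \<forall>s>0. T (M x y t) (M y z s) \<le> M x z (t + s)"
    using assms(1) unfolding fuzzy_metric_def by (elim conjE)
  then have "T (M x y t) (M y z t) \<le> M x z (t + t)"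
    using assms(3-6) by blast
  also have "M x z (t + t) = M x z t"
    using assms(2,3,5,6) unfolding stationary_fuzzy_metric_def by (meson add_pos_pos)
  finally show ?thesis .
qed

lemma stationary_fuzzy_metric_section_R_uniformly_continuous:
  assumes fm: "fuzzy_metric X M T" and st: "stationary_fuzzy_metric X M"
    and "y \<in> X" "t > 0"
  shows "R_uniformly_continuous X M (\<lambda>x. M x y t)"
  unfolding R_uniformly_continuous_def
proof (intro allI impI)
  fix e :: real assume "e > 0"
  obtain d where "d > 0" and near: "\<And>a b. a \<in> {0..1} \<Longrightarrow> b \<in> {0..1} \<Longrightarrow> 1 - a < d \<Longrightarrow>
      \<bar>T a b - b\<bar> < e"
    using fuzzy_metric_cont_tnorm[OF fm] \<open>e > 0\<close> by (rule cont_tnorm_uniformly_near_one) blast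
  define \<delta> where "\<delta> = min d (1/2)"
  have lower: "M z y t - e < M x y t" if "x \<in> X" "z \<in> X" "1 - \<delta> < M x z t" for x z
  proof -
    have "1 - M x z t < d" using that(3) unfolding \<delta>_def by linarith
    then have "\<bar>T (M x z t) (M z y t) - M z y t\<bar> < e"
      using near fuzzy_metric_range[OF fm] that(1,2) \<open>y \<in> X\<close> \<open>t > 0\<close> by blast
    moreover have "T (M x z t) (M z y t) \<le> M x y t"
      using stationary_fuzzy_metric_triangle[OF fm st that(1,2) \<open>y \<in> X\<close> \<open>t > 0\<close>] .
    ultimately show ?thesis by linarith
  qed
  have "\<bar>M x y t - M z y t\<bar> < e" if "x \<in> X" "z \<in> X" "1 - \<delta> < M x z t" for x z
  proof -
    have "M x y t - e < M z y t"
      using lower[of z x] that fuzzy_metric_commute[OF fm that(1,2) \<open>t > 0\<close>] by simp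
    moreover have "M z y t - e < M x y t" using lower[of x z] that by simp
    ultimately show ?thesis by linarith
  qed
  moreover have "0 < \<delta>" "\<delta> < 1" using \<open>d > 0\<close> unfolding \<delta>_def by auto
  ultimately show "\<exists>s>0. \<exists>\<delta>. 0 < \<delta> \<and> \<delta> < 1 \<and>
      (\<forall>x\<in>X. \<forall>z\<in>X. 1 - \<delta> < M x z s \<longrightarrow> \<bar>M x y t - M z y t\<bar> < e)"
    using \<open>t > 0\<close> by blast
qed

theorem mainTheorem1:
  fixes X :: "'a set" and M :: "'a \<Rightarrow> 'a \<Rightarrow> real \<Rightarrow> real" and T :: "real \<Rightarrow> real \<Rightarrow> real"
  assumes "fuzzy_metric X M T"
    and "stationary_fuzzy_metric X M"
    and "y \<in> X"
  shows "R_uniformly_continuous X M (\<lambda>x. M x y 1)"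
  using stationary_fuzzy_metric_section_R_uniformly_continuous[OF assms] by simp

end
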